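(* Let $G=(V,E)$ be a graph on $V=\{1,\dots,N\}$, let $\mathcal L\subseteq\{1,\dots,N\}$ be a set of lost qubits, let $\rho$ be the post-loss state defined in the context, and let $G'=G[V\setminus\mathcal L]$. Let $r$ be a root of $G$ (a vertex of degree $n_{\max}=n_{\max}(G)$) with $r\notin\mathcal L$. Define $$\mathcal W^{G}=\mathcal N_r^{G}\setminus\bigcup_{l\in\mathcal L}\overline{\mathcal N_l^{G}},\qquad \mathcal T^{G}=\{1,\dots,N\}\setminus\Big(\bigcup_{l\in\mathcal L}\overline{\mathcal N_l^{G}}\cup\overline{\mathcal N_r^{G}}\Big).$$ Then $$\langle I_r^{G*}\rangle_\rho=\langle I_r^{G'*}\rangle_\rho=\begin{cases}\sqrt2\,n_{\max}+\sqrt2\,|\mathcal W^{G}|+|\mathcal T^{G}| & \text{if } \overline{\mathcal N_r^{G}}\cap\mathcal L=\emptyset,\\[2pt] \sqrt2\,|\mathcal W^{G}|+|\mathcal T^{G}| & \text{otherwise.}\end{cases}$$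
   Context: Qubits are labelled $1,\dots,N$; $X_i,Z_i$ denote the Pauli $X$ and $Z$ operators acting on qubit $i$ (identity on all other qubits). For a simple undirected graph $H$ with vertex set $V(H)\subseteq\{1,\dots,N\}$, $\mathcal N_i^H$ is the set of neighbours of $i$ in $H$, $\overline{\mathcal N_i^H}=\mathcal N_i^H\cup\{i\}$, and $n_{\max}(H)$ is the maximum degree of $H$; a root of $H$ is a vertex of degree $n_{\max}(H)$. The stabilizer of vertex $i$ in $H$ is $S_i^H=X_i\prod_{j\in\mathcal N_i^H}Z_j$. For $G=(V,E)$ with $V=\{1,\dots,N\}$, the graph state $|\phi^G\rangle$ is the unique $N$-qubit state with $S_i^G|\phi^G\rangle=|\phi^G\rangle$ for all $i$. For a vertex $r$ of $H$ define the operator $$I_r^{H*}=\sqrt2\,n_{\max}(H)\,S_r^H+\sqrt2\sum_{i\in\mathcal N_r^H}S_i^H+\sum_{i\in V(H)\setminus\overline{\mathcal N_r^H}}S_i^H .$$ For a set $\mathcal L\subseteq\{1,\dots,N\}$ of lost qubits, $G'=G[V\setminus\mathcal L]$ is the induced subgraph on $V\setminus\mathcal L$ (vertices keep their labels; its operators act as identity on qubits in $\mathcal L$), and the post-loss state is the $N$-qubit state $\rho=\mathrm{Tr}_{\mathcal L}\big(|\phi^G\rangle\langle\phi^G|\big)\otimes\bigotimes_{l\in\mathcal L}|0\rangle\langle0|_l$. $\langle A\rangle_\rho=\mathrm{Tr}(A\rho)$. *)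

theory Defs
  imports Complex_Main
begin

(* N-qubit computational basis states are indexed by the set of qubits in state |1>,
   i.e. by subsets of {1..N}.  An N-qubit operator is a matrix indexed by such sets,
   a state vector is a function on such sets (zero outside Pow {1..N}). *)
type_synonym op = "nat set \<Rightarrow> nat set \<Rightarrow> complex"
type_synonym vec = "nat set \<Rightarrow> complex"

definition qbasis :: "nat \<Rightarrow> nat set set" where
  "qbasis N = Pow {1..N}"

definition mmul :: "nat \<Rightarrow> op \<Rightarrow> op \<Rightarrow> op" where
  "mmul N A B = (\<lambda>a b. \<Sum>c\<in>qbasis N. A a c * B c b)"

definition apply_op :: "nat \<Rightarrow> op \<Rightarrow> vec \<Rightarrow> vec" where
  "apply_op N A v = (\<lambda>a. \<Sum>b\<in>qbasis N. A a b * v b)"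

definition op_add :: "op \<Rightarrow> op \<Rightarrow> op" where
  "op_add A B = (\<lambda>a b. A a b + B a b)"

definition op_scale :: "complex \<Rightarrow> op \<Rightarrow> op" where
  "op_scale c A = (\<lambda>a b. c * A a b)"

definition op_sum :: "('i \<Rightarrow> op) \<Rightarrow> 'i set \<Rightarrow> op" where
  "op_sum F I = (\<lambda>a b. \<Sum>i\<in>I. F i a b)"

definition Xop :: "nat \<Rightarrow> op" where
  "Xop i = (\<lambda>a b. if a = (if i \<in> b then b - {i} else insert i b) then 1 else 0)"

definition Zop :: "nat \<Rightarrow> op" where
  "Zop i = (\<lambda>a b. if a = b then (if i \<in> a then -1 else 1) else 0)"

definition Zprod :: "nat set \<Rightarrow> op" where
  "Zprod J = (\<lambda>a b. if a = b then (\<Prod>j\<in>J. Zop j a a) else 0)"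

definition trace_op :: "nat \<Rightarrow> op \<Rightarrow> complex" where
  "trace_op N A = (\<Sum>a\<in>qbasis N. A a a)"

definition expect :: "nat \<Rightarrow> op \<Rightarrow> op \<Rightarrow> complex" where
  "expect N A \<rho> = trace_op N (mmul N A \<rho>)"

(* Graphs: simple undirected graph given by symmetric irreflexive adjacency E;
   a (sub)graph H is the induced graph on vertex set W. *)
definition nbrs :: "(nat \<Rightarrow> nat \<Rightarrow> bool) \<Rightarrow> nat set \<Rightarrow> nat \<Rightarrow> nat set" where
  "nbrs E W i = {j \<in> W. E i j}"

definition cnbrs :: "(nat \<Rightarrow> nat \<Rightarrow> bool) \<Rightarrow> nat set \<Rightarrow> nat \<Rightarrow> nat set" where
  "cnbrs E W i = insert i (nbrs E W i)"

definition nmax :: "(nat \<Rightarrow> nat \<Rightarrow> bool) \<Rightarrow> nat set \<Rightarrow> nat" where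
  "nmax E W = Max ((\<lambda>i. card (nbrs E W i)) ` W)"

definition stab :: "nat \<Rightarrow> (nat \<Rightarrow> nat \<Rightarrow> bool) \<Rightarrow> nat set \<Rightarrow> nat \<Rightarrow> op" where
  "stab N E W i = mmul N (Xop i) (Zprod (nbrs E W i))"

definition Iop :: "nat \<Rightarrow> (nat \<Rightarrow> nat \<Rightarrow> bool) \<Rightarrow> nat set \<Rightarrow> nat \<Rightarrow> op" where
  "Iop N E W r =
     op_add (op_scale (complex_of_real (sqrt 2 * real (nmax E W))) (stab N E W r))
      (op_add (op_scale (complex_of_real (sqrt 2)) (op_sum (stab N E W) (nbrs E W r)))
              (op_sum (stab N E W) (W - cnbrs E W r)))"

definition is_graph_state :: "nat \<Rightarrow> (nat \<Rightarrow> nat \<Rightarrow> bool) \<Rightarrow> vec \<Rightarrow> bool" where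
  "is_graph_state N E \<psi> \<longleftrightarrow>
     (\<forall>a. a \<notin> qbasis N \<longrightarrow> \<psi> a = 0) \<and>
     (\<Sum>a\<in>qbasis N. (cmod (\<psi> a))\<^sup>2) = 1 \<and>
     (\<forall>i\<in>{1..N}. \<forall>a\<in>qbasis N. apply_op N (stab N E {1..N} i) \<psi> a = \<psi> a)"

(* |phi^G><phi^G| (independent of the global phase of the chosen vector) *)
definition graph_dm :: "nat \<Rightarrow> (nat \<Rightarrow> nat \<Rightarrow> bool) \<Rightarrow> op" where
  "graph_dm N E = (let \<psi> = (SOME \<psi>. is_graph_state N E \<psi>) in (\<lambda>a b. \<psi> a * cnj (\<psi> b)))"

(* Tr_L(|phi^G><phi^G|) tensor |0><0| on the qubits in L *)
definition post_loss :: "nat \<Rightarrow> (nat \<Rightarrow> nat \<Rightarrow> bool) \<Rightarrow> nat set \<Rightarrow> op" where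
  "post_loss N E L = (\<lambda>a b. if a \<inter> L = {} \<and> b \<inter> L = {}
       then (\<Sum>c\<in>Pow L. graph_dm N E (a \<union> c) (b \<union> c)) else 0)"

end

theory Submission
  imports Defs
begin

text \<open>
  Everything reduces to one identity: in the post-loss state the stabilizer \<open>S\<^sub>i\<^sup>H\<close> of any
  induced subgraph \<open>H\<close> containing all surviving vertices has expectation 1 if the closed
  neighbourhood of \<open>i\<close> in \<open>G\<close> avoids \<open>\<L>\<close>, and 0 otherwise.  Tracing out \<open>\<L>\<close> and resetting it to
  \<open>|0\<rangle>\<close> kills \<open>X\<^sub>i\<close> for \<open>i \<in> \<L>\<close> and turns every \<open>Z\<^sub>l\<close>, \<open>l \<in> \<L>\<close>, into the identity, so for \<open>i \<notin> \<L>\<close>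
  the value is \<open>\<langle>\<phi>\<^sup>G| X\<^sub>i Z\<^sub>K |\<phi>\<^sup>G\<rangle>\<close> with \<open>K = \<N>\<^sub>i\<^sup>H - \<L> = \<N>\<^sub>i\<^sup>G - \<L>\<close>.  Using \<open>S\<^sub>i\<^sup>G |\<phi>\<^sup>G\<rangle> = |\<phi>\<^sup>G\<rangle>\<close> this
  becomes the expectation of \<open>Z\<close> on the symmetric difference of \<open>K\<close> and \<open>\<N>\<^sub>i\<^sup>G\<close>, which vanishes
  unless the difference is empty, because applying any \<open>S\<^sub>l\<^sup>G\<close> with \<open>l\<close> in it flips its sign.
  Summing the identity over the terms of \<open>I\<^sub>r\<^sup>H\<^sup>*\<close> counts \<open>\<W>\<close> and \<open>\<T>\<close>; the coefficients agree for
  \<open>H = G\<close> and \<open>H = G'\<close> because, when the root survives with all its neighbours, it is still a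
  vertex of maximal degree in \<open>G'\<close>.
\<close>

definition flip :: "nat \<Rightarrow> nat set \<Rightarrow> nat set" where
  "flip i a = (if i \<in> a then a - {i} else insert i a)"

definition zsign :: "nat set \<Rightarrow> nat set \<Rightarrow> complex" where
  "zsign K a = (\<Prod>j\<in>K. if j \<in> a then -1 else 1)"

definition pauli_xz :: "nat \<Rightarrow> nat \<Rightarrow> nat set \<Rightarrow> op" where
  "pauli_xz N i K = mmul N (Xop i) (Zprod K)"

lemma flip_flip [simp]: "flip i (flip i a) = a"
  by (auto simp: flip_def)

lemma flip_eq_iff: "a = flip i b \<longleftrightarrow> b = flip i a"
  by (metis flip_flip)

lemma flip_in_qbasis: "i \<in> {1..N} \<Longrightarrow> a \<in> qbasis N \<Longrightarrow> flip i a \<in> qbasis N"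
  by (auto simp: flip_def qbasis_def)

lemma finite_qbasis [simp]: "finite (qbasis N)"
  by (simp add: qbasis_def)

lemma zsign_mult_self: "zsign K a * zsign K a = 1"
  unfolding zsign_def prod.distrib[symmetric] by (rule prod.neutral) auto

lemma cnj_zsign [simp]: "cnj (zsign K a) = zsign K a"
  unfolding zsign_def cnj_prod by (intro prod.cong) auto

lemma zsign_flip:
  assumes "finite K"
  shows "zsign K (flip l a) = (if l \<in> K then - zsign K a else zsign K a)"
proof -
  have rest: "zsign (K - {l}) (flip l a) = zsign (K - {l}) a"
    unfolding zsign_def by (intro prod.cong) (auto simp: flip_def)
  show ?thesis
  proof (cases "l \<in> K")
    case True
    then show ?thesis
      using assms rest unfolding zsign_def by (simp add: prod.remove flip_def)
  next
    case False
    then show ?thesis using rest by simp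
  qed
qed

lemma zsign_Diff: "finite K \<Longrightarrow> zsign K (a - L) = zsign (K - L) a"
  unfolding zsign_def by (intro prod.mono_neutral_cong_right) auto

lemma Zprod_eq_zsign: "Zprod K a b = (if a = b then zsign K b else 0)"
  by (simp add: Zprod_def zsign_def Zop_def)

lemma pauli_xz_eq:
  "pauli_xz N i K a b = (if b \<in> qbasis N \<and> a = flip i b then zsign K b else 0)"
proof -
  have "pauli_xz N i K a b = (\<Sum>c\<in>qbasis N. if c = b then Xop i a b * zsign K b else 0)"
    unfolding pauli_xz_def mmul_def Zprod_eq_zsign by (intro sum.cong) auto
  then show ?thesis by (simp add: sum.delta' Xop_def flip_def)
qed

lemma stab_eq_pauli_xz: "stab N E W i = pauli_xz N i (nbrs E W i)"
  by (simp add: stab_def pauli_xz_def)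

lemma expect_op_add: "expect N (op_add A B) \<rho> = expect N A \<rho> + expect N B \<rho>"
  unfolding expect_def trace_op_def mmul_def op_add_def
  by (simp add: distrib_right sum.distrib)

lemma expect_op_scale: "expect N (op_scale c A) \<rho> = c * expect N A \<rho>"
  unfolding expect_def trace_op_def mmul_def op_scale_def
  by (simp add: sum_distrib_left mult.assoc)

lemma expect_op_sum: "expect N (op_sum F I) \<rho> = (\<Sum>i\<in>I. expect N (F i) \<rho>)"
  unfolding expect_def trace_op_def mmul_def op_sum_def
  by (simp add: sum_distrib_right sum.swap[of _ I])

lemma expect_Iop:
  "expect N (Iop N E W r) \<rho> =
    complex_of_real (sqrt 2 * real (nmax E W)) * expect N (stab N E W r) \<rho>
    + complex_of_real (sqrt 2) * (\<Sum>i\<in>nbrs E W r. expect N (stab N E W i) \<rho>)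
    + (\<Sum>i\<in>W - cnbrs E W r. expect N (stab N E W i) \<rho>)"
  unfolding Iop_def expect_op_add expect_op_scale expect_op_sum by (simp add: add.assoc)

lemma expect_pauli_xz:
  assumes "i \<in> {1..N}"
  shows "expect N (pauli_xz N i K) \<rho> = (\<Sum>a\<in>qbasis N. zsign K a * \<rho> a (flip i a))"
proof -
  have "expect N (pauli_xz N i K) \<rho> =
      (\<Sum>b\<in>qbasis N. \<Sum>a\<in>qbasis N. if b = flip i a then zsign K a * \<rho> a b else 0)"
    unfolding expect_def trace_op_def mmul_def pauli_xz_eq by (intro sum.cong) auto
  also have "\<dots> = (\<Sum>a\<in>qbasis N. \<Sum>b\<in>qbasis N. if b = flip i a then zsign K a * \<rho> a b else 0)"
    by (rule sum.swap)
  also have "\<dots> = (\<Sum>a\<in>qbasis N. zsign K a * \<rho> a (flip i a))"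
    using flip_in_qbasis[OF assms] by (intro sum.cong) auto
  finally show ?thesis .
qed

lemma expect_pauli_xz_post_loss:
  assumes i: "i \<in> {1..N}" and L: "L \<subseteq> {1..N}" and K: "finite K"
  shows "expect N (pauli_xz N i K) (post_loss N E L) =
    (if i \<in> L then 0 else (\<Sum>a\<in>qbasis N. zsign (K - L) a * graph_dm N E a (flip i a)))"
proof (cases "i \<in> L")
  case True
  then have "post_loss N E L a (flip i a) = 0" for a
    unfolding post_loss_def flip_def by auto
  with True show ?thesis by (simp add: expect_pauli_xz[OF i])
next
  case False
  let ?S = "Sigma {c \<in> qbasis N. c \<inter> L = {}} (\<lambda>_. Pow L)"
  let ?g = "\<lambda>a. zsign K (a - L) * graph_dm N E a (flip i a)"
  have flip_Int: "flip i c \<inter> L = c \<inter> L" for c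
    using False by (auto simp: flip_def)
  have g: "?g (c \<union> e) = zsign K c * graph_dm N E (c \<union> e) (flip i c \<union> e)"
    if "c \<inter> L = {}" "e \<subseteq> L" for c e
  proof -
    have "(c \<union> e) - L = c" "flip i (c \<union> e) = flip i c \<union> e"
      using that False by (auto simp: flip_def)
    then show ?thesis by simp
  qed
  have "expect N (pauli_xz N i K) (post_loss N E L) =
      (\<Sum>c\<in>qbasis N. if c \<inter> L = {} then (\<Sum>e\<in>Pow L. ?g (c \<union> e)) else 0)"
    unfolding expect_pauli_xz[OF i] post_loss_def flip_Int
    by (intro sum.cong refl) (auto simp: sum_distrib_left g)
  also have "\<dots> = (\<Sum>c\<in>{c \<in> qbasis N. c \<inter> L = {}}. \<Sum>e\<in>Pow L. ?g (c \<union> e))"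
    by (simp add: sum.inter_filter)
  also have "\<dots> = (\<Sum>(c, e)\<in>?S. ?g (c \<union> e))"
    using finite_subset[OF L] by (intro sum.Sigma) auto
  also have "\<dots> = (\<Sum>a\<in>qbasis N. ?g a)"
    by (rule sum.reindex_bij_witness[of _ "\<lambda>a. (a - L, a \<inter> L)" "\<lambda>(c, e). c \<union> e"])
      (use L in \<open>auto simp: qbasis_def\<close>)
  finally show ?thesis
    using False K by (simp add: zsign_Diff)
qed

lemma graph_state_flip:
  assumes gs: "is_graph_state N E \<psi>" and i: "i \<in> {1..N}" and a: "a \<in> qbasis N"
  shows "\<psi> (flip i a) = zsign (nbrs E {1..N} i) a * \<psi> a"
proof -
  have "\<psi> (flip i a) = apply_op N (stab N E {1..N} i) \<psi> (flip i a)"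
    using gs i flip_in_qbasis[OF i a] unfolding is_graph_state_def by auto
  also have "\<dots> = (\<Sum>b\<in>qbasis N. if b = a then zsign (nbrs E {1..N} i) b * \<psi> b else 0)"
    unfolding apply_op_def stab_eq_pauli_xz pauli_xz_eq
    by (intro sum.cong) (auto simp: flip_eq_iff[of "flip i a"])
  also have "\<dots> = zsign (nbrs E {1..N} i) a * \<psi> a"
    using a by simp
  finally show ?thesis .
qed

lemma graph_state_norm_sum:
  assumes "is_graph_state N E \<psi>"
  shows "(\<Sum>a\<in>qbasis N. \<psi> a * cnj (\<psi> a)) = 1"
proof -
  have "(\<Sum>a\<in>qbasis N. \<psi> a * cnj (\<psi> a)) = (\<Sum>a\<in>qbasis N. complex_of_real ((cmod (\<psi> a))\<^sup>2))"
    by (intro sum.cong refl) (simp only: complex_norm_square)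
  with assms show ?thesis
    unfolding is_graph_state_def of_real_sum[symmetric] by simp
qed

lemma graph_state_zsign_correlation:
  assumes gs: "is_graph_state N E \<psi>" and A: "A \<subseteq> {1..N}" and B: "B \<subseteq> {1..N}"
  shows "(\<Sum>a\<in>qbasis N. zsign A a * zsign B a * (\<psi> a * cnj (\<psi> a))) = (if A = B then 1 else 0)"
proof (cases "A = B")
  case True
  then show ?thesis
    using graph_state_norm_sum[OF gs] by (simp add: zsign_mult_self)
next
  case False
  then obtain l where l: "l \<in> A \<and> l \<notin> B \<or> l \<in> B \<and> l \<notin> A" by blast
  with A B have lV: "l \<in> {1..N}" by blast
  have fin: "finite A" "finite B"
    using A B finite_subset by auto
  let ?f = "\<lambda>a. zsign A a * zsign B a * (\<psi> a * cnj (\<psi> a))"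
  \<comment> \<open>flipping a vertex in exactly one of A, B negates the summand and permutes the basis\<close>
  have "?f (flip l a) = - ?f a" if a: "a \<in> qbasis N" for a
  proof -
    let ?z = "zsign (nbrs E {1..N} l) a"
    have "zsign A (flip l a) * zsign B (flip l a) = - (zsign A a * zsign B a)"
      using l by (auto simp: zsign_flip fin)
    moreover have "\<psi> (flip l a) * cnj (\<psi> (flip l a)) = (?z * ?z) * (\<psi> a * cnj (\<psi> a))"
      by (simp add: graph_state_flip[OF gs lV a] mult_ac)
    ultimately show ?thesis
      by (simp add: zsign_mult_self)
  qed
  then have "(\<Sum>a\<in>qbasis N. ?f a) = - (\<Sum>a\<in>qbasis N. ?f (flip l a))"
    by (simp add: sum_negf)
  also have "(\<Sum>a\<in>qbasis N. ?f (flip l a)) = (\<Sum>a\<in>qbasis N. ?f a)"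
    by (rule sum.reindex_bij_witness[of _ "flip l" "flip l"]) (auto simp: flip_in_qbasis[OF lV])
  finally show ?thesis
    using False by simp
qed

lemma graph_state_pauli_xz_correlation:
  assumes gs: "is_graph_state N E \<psi>" and i: "i \<in> {1..N}" and K: "K \<subseteq> {1..N}"
  shows "(\<Sum>a\<in>qbasis N. zsign K a * (\<psi> a * cnj (\<psi> (flip i a)))) =
    (if K = nbrs E {1..N} i then 1 else 0)"
proof -
  have "(\<Sum>a\<in>qbasis N. zsign K a * (\<psi> a * cnj (\<psi> (flip i a)))) =
      (\<Sum>a\<in>qbasis N. zsign K a * zsign (nbrs E {1..N} i) a * (\<psi> a * cnj (\<psi> a)))"
    by (intro sum.cong refl) (simp add: graph_state_flip[OF gs i] mult_ac)
  also have "\<dots> = (if K = nbrs E {1..N} i then 1 else 0)"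
    using K by (intro graph_state_zsign_correlation[OF gs]) (auto simp: nbrs_def)
  finally show ?thesis .
qed

lemma nmax_eq_if_root_nbrs_subset:
  assumes V: "finite V" and W: "W \<subseteq> V" and r: "r \<in> W" "nbrs E V r \<subseteq> W"
    and root: "card (nbrs E V r) = nmax E V"
  shows "nmax E W = nmax E V"
  unfolding nmax_def
proof (rule Max_eqI)
  show "finite ((\<lambda>i. card (nbrs E W i)) ` W)"
    using V W finite_subset by blast
next
  fix d assume "d \<in> (\<lambda>i. card (nbrs E W i)) ` W"
  then obtain i where i: "i \<in> W" "d = card (nbrs E W i)" by blast
  then have "d \<le> card (nbrs E V i)"
    using V W by (auto intro!: card_mono simp: nbrs_def)
  also have "\<dots> \<le> Max ((\<lambda>i. card (nbrs E V i)) ` V)"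
    using V W i by (auto intro!: Max_ge)
  finally show "d \<le> Max ((\<lambda>i. card (nbrs E V i)) ` V)" .
next
  have "nbrs E W r = nbrs E V r"
    using r W by (auto simp: nbrs_def)
  with root r show "Max ((\<lambda>i. card (nbrs E V i)) ` V) \<in> (\<lambda>i. card (nbrs E W i)) ` W"
    unfolding nmax_def by (metis image_eqI)
qed

lemma sum_if_mem_0_1_eq_card_Diff:
  "finite I \<Longrightarrow> (\<Sum>i\<in>I. if i \<in> D then 0 else 1) = of_nat (card (I - D))"
  by (simp add: sum.If_cases Diff_eq)

definition edge_sign :: "(nat \<Rightarrow> nat \<Rightarrow> bool) \<Rightarrow> nat set \<Rightarrow> complex" where
  "edge_sign E a = (\<Prod>x\<in>a. \<Prod>y\<in>a. if E x y \<and> x < y then -1 else 1)"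

text \<open>
  The explicit graph state \<open>2^(-N/2) \<Sum>\<^sub>a (-1)^|E(G[a])| |a\<rangle>\<close> shows that the choice made by
  \<open>SOME\<close> in \<open>graph_dm\<close> is a genuine graph state.
\<close>

definition graph_vec :: "nat \<Rightarrow> (nat \<Rightarrow> nat \<Rightarrow> bool) \<Rightarrow> vec" where
  "graph_vec N E a =
    (if a \<in> qbasis N then edge_sign E a * complex_of_real (1 / sqrt (2 ^ N)) else 0)"

lemma norm_edge_sign: "cmod (edge_sign E a) = 1"
  unfolding edge_sign_def prod_norm[symmetric]
  by (intro prod.neutral ballI) (simp add: prod_norm[symmetric])

context
  fixes E :: "nat \<Rightarrow> nat \<Rightarrow> bool"
  assumes sym: "\<And>i j. E i j \<longleftrightarrow> E j i"
begin

lemma edge_sign_insert: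
  assumes V: "finite V" "a \<subseteq> V" and k: "k \<notin> a"
  shows "edge_sign E (insert k a) = edge_sign E a * zsign (nbrs E V k) a"
proof -
  let ?t = "\<lambda>x y. if E x y \<and> x < y then -1 else (1::complex)"
  have a: "finite a"
    using V finite_subset by auto
  have "edge_sign E (insert k a) = (\<Prod>y\<in>insert k a. ?t k y) * (\<Prod>x\<in>a. \<Prod>y\<in>insert k a. ?t x y)"
    unfolding edge_sign_def using a k by simp
  also have "\<dots> = (\<Prod>y\<in>a. ?t k y * ?t y k) * edge_sign E a"
    unfolding edge_sign_def using a k by (simp add: prod.distrib mult_ac)
  also have "(\<Prod>y\<in>a. ?t k y * ?t y k) = zsign (nbrs E V k) a"
  proof -
    have "?t k y * ?t y k = (if E k y then -1 else 1)" if "y \<in> a" for y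
      using that k sym[of y k] by (cases "k < y") auto
    then have "(\<Prod>y\<in>a. ?t k y * ?t y k) = (\<Prod>y\<in>a. if E k y then -1 else 1)"
      by (rule prod.cong[OF refl])
    also have "\<dots> = (\<Prod>y\<in>{y\<in>a. E k y}. -1)"
      using a by (simp only: prod.inter_filter)
    also have "{y\<in>a. E k y} = {j \<in> nbrs E V k. j \<in> a}"
      using V by (auto simp: nbrs_def)
    also have "(\<Prod>j\<in>{j \<in> nbrs E V k. j \<in> a}. -1) = zsign (nbrs E V k) a"
      unfolding zsign_def using V by (subst prod.inter_filter) (auto simp: nbrs_def)
    finally show ?thesis .
  qed
  finally show ?thesis by simp
qed

lemma notin_loss_nbhd_iff:
  assumes "i \<in> V" "L \<subseteq> V"
  shows "i \<notin> (\<Union>l\<in>L. cnbrs E V l) \<longleftrightarrow> cnbrs E V i \<inter> L = {}"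
  using assms sym by (auto simp: cnbrs_def nbrs_def)

context
  assumes irrefl: "\<And>i. \<not> E i i"
begin

lemma zsign_flip_edge_sign:
  assumes V: "finite V" "a \<subseteq> V" and i: "i \<in> V"
  shows "zsign (nbrs E V i) (flip i a) * edge_sign E (flip i a) = edge_sign E a"
proof (cases "i \<in> a")
  case True
  have "a - {i} \<subseteq> V" "insert i (a - {i}) = a"
    using V(2) True by blast+
  then have "edge_sign E a = edge_sign E (a - {i}) * zsign (nbrs E V i) (a - {i})"
    using edge_sign_insert[OF V(1), of "a - {i}" i] by simp
  with True show ?thesis
    by (simp add: flip_def mult.commute)
next
  case False
  have "finite (nbrs E V i)" "i \<notin> nbrs E V i"
    using V irrefl by (simp_all add: nbrs_def)
  then have "zsign (nbrs E V i) (flip i a) = zsign (nbrs E V i) a"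
    by (simp add: zsign_flip)
  moreover have "edge_sign E (flip i a) = edge_sign E a * zsign (nbrs E V i) a"
    using edge_sign_insert[OF V False] False by (simp add: flip_def)
  ultimately show ?thesis
    by (simp add: mult_ac zsign_mult_self)
qed

lemma graph_vec_is_graph_state: "is_graph_state N E (graph_vec N E)"
  unfolding is_graph_state_def
proof (intro conjI ballI allI impI)
  fix a assume "a \<notin> qbasis N"
  then show "graph_vec N E a = 0" by (simp add: graph_vec_def)
next
  have "(\<Sum>a\<in>qbasis N. (cmod (graph_vec N E a))\<^sup>2) = (\<Sum>a\<in>qbasis N. 1 / 2 ^ N)"
    by (intro sum.cong refl) (simp add: graph_vec_def norm_mult norm_divide norm_edge_sign power_divide)
  also have "\<dots> = 1" by (simp add: qbasis_def card_Pow)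
  finally show "(\<Sum>a\<in>qbasis N. (cmod (graph_vec N E a))\<^sup>2) = 1" .
next
  fix i a assume i: "i \<in> {1..N}" and a: "a \<in> qbasis N"
  let ?z = "zsign (nbrs E {1..N} i)"
  have "apply_op N (stab N E {1..N} i) (graph_vec N E) a =
      (\<Sum>b\<in>qbasis N. if b = flip i a then ?z b * graph_vec N E b else 0)"
    unfolding apply_op_def stab_eq_pauli_xz pauli_xz_eq
    by (intro sum.cong) (auto simp: flip_eq_iff[of a])
  also have "\<dots> = ?z (flip i a) * graph_vec N E (flip i a)"
    using flip_in_qbasis[OF i a] by simp
  also have "\<dots> = graph_vec N E a"
    using a flip_in_qbasis[OF i a] zsign_flip_edge_sign[of "{1..N}" a i] i
    by (simp add: graph_vec_def qbasis_def mult.assoc[symmetric])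
  finally show "apply_op N (stab N E {1..N} i) (graph_vec N E) a = graph_vec N E a" .
qed

lemma graph_dm_eq:
  obtains \<psi> where "is_graph_state N E \<psi>" and "\<And>a b. graph_dm N E a b = \<psi> a * cnj (\<psi> b)"
proof -
  define \<psi> where "\<psi> = (SOME \<psi>. is_graph_state N E \<psi>)"
  have "is_graph_state N E \<psi>"
    unfolding \<psi>_def by (rule someI[of "is_graph_state N E", OF graph_vec_is_graph_state])
  moreover have "graph_dm N E a b = \<psi> a * cnj (\<psi> b)" for a b
    unfolding graph_dm_def \<psi>_def Let_def by (rule refl)
  ultimately show ?thesis
    by (rule that)
qed

lemma expect_pauli_xz_graph_post_loss:
  assumes i: "i \<in> {1..N}" and L: "L \<subseteq> {1..N}" and K: "K \<subseteq> {1..N}"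
  shows "expect N (pauli_xz N i K) (post_loss N E L) =
    (if i \<notin> L \<and> K - L = nbrs E {1..N} i then 1 else 0)"
proof -
  obtain \<psi> where gs: "is_graph_state N E \<psi>" and dm: "\<And>a b. graph_dm N E a b = \<psi> a * cnj (\<psi> b)"
    using graph_dm_eq[of N] by blast
  have fin: "finite K" and KL: "K - L \<subseteq> {1..N}"
    using K finite_subset by auto
  show ?thesis
  proof (cases "i \<in> L")
    case True
    then show ?thesis by (simp add: expect_pauli_xz_post_loss[OF i L fin])
  next
    case False
    then have "expect N (pauli_xz N i K) (post_loss N E L) =
        (\<Sum>a\<in>qbasis N. zsign (K - L) a * (\<psi> a * cnj (\<psi> (flip i a))))"
      by (simp add: expect_pauli_xz_post_loss[OF i L fin] dm)
    also have "\<dots> = (if K - L = nbrs E {1..N} i then 1 else 0)"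
      by (rule graph_state_pauli_xz_correlation[OF gs i KL])
    finally show ?thesis
      using False by simp
  qed
qed

lemma expect_stab_post_loss:
  assumes L: "L \<subseteq> {1..N}" and W: "{1..N} - L \<subseteq> W" "W \<subseteq> {1..N}" and i: "i \<in> W"
  shows "expect N (stab N E W i) (post_loss N E L) =
    (if i \<in> (\<Union>l\<in>L. cnbrs E {1..N} l) then 0 else 1)"
proof -
  have iV: "i \<in> {1..N}"
    using i W by blast
  have "nbrs E W i - L = nbrs E {1..N} i - L" "nbrs E W i \<subseteq> {1..N}"
    using W by (auto simp: nbrs_def)
  moreover have "i \<notin> (\<Union>l\<in>L. cnbrs E {1..N} l) \<longleftrightarrow> i \<notin> L \<and> nbrs E {1..N} i \<inter> L = {}"
    unfolding notin_loss_nbhd_iff[OF iV L] by (auto simp: cnbrs_def)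
  ultimately show ?thesis
    by (auto simp: stab_eq_pauli_xz expect_pauli_xz_graph_post_loss[OF iV L])
qed

lemma expect_Iop_post_loss:
  assumes L: "L \<subseteq> {1..N}" and W: "{1..N} - L \<subseteq> W" "W \<subseteq> {1..N}" and r: "r \<in> W"
  defines "D \<equiv> \<Union>l\<in>L. cnbrs E {1..N} l"
  shows "expect N (Iop N E W r) (post_loss N E L) = complex_of_real
    (sqrt 2 * real (nmax E W) * (if r \<in> D then 0 else 1)
     + sqrt 2 * real (card (nbrs E {1..N} r - D)) + real (card ({1..N} - (D \<union> cnbrs E {1..N} r))))"
proof -
  let ?\<rho> = "post_loss N E L"
  have stab: "expect N (stab N E W i) ?\<rho> = (if i \<in> D then 0 else 1)" if "i \<in> W" for i
    unfolding D_def by (rule expect_stab_post_loss[OF L W that])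
  have "L \<subseteq> D"
    by (auto simp: D_def cnbrs_def)
  then have nbrs: "nbrs E W r - D = nbrs E {1..N} r - D"
    and rest: "W - cnbrs E W r - D = {1..N} - (D \<union> cnbrs E {1..N} r)"
    using W r by (auto simp: cnbrs_def nbrs_def)
  have fin: "finite W"
    using W finite_subset by blast
  have "(\<Sum>i\<in>nbrs E W r. expect N (stab N E W i) ?\<rho>) =
      (\<Sum>i\<in>nbrs E W r. if i \<in> D then 0 else 1)"
    by (intro sum.cong refl stab) (simp add: nbrs_def)
  also have "\<dots> = of_nat (card (nbrs E {1..N} r - D))"
  proof -
    have "finite (nbrs E W r)"
      using fin by (simp add: nbrs_def)
    then show ?thesis
      by (simp only: sum_if_mem_0_1_eq_card_Diff nbrs)
  qed
  finally have sum_nbrs: "(\<Sum>i\<in>nbrs E W r. expect N (stab N E W i) ?\<rho>) = \<dots>" .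
  have "(\<Sum>i\<in>W - cnbrs E W r. expect N (stab N E W i) ?\<rho>) =
      (\<Sum>i\<in>W - cnbrs E W r. if i \<in> D then 0 else 1)"
    by (intro sum.cong refl stab) simp
  also have "\<dots> = of_nat (card ({1..N} - (D \<union> cnbrs E {1..N} r)))"
    using fin by (simp add: sum_if_mem_0_1_eq_card_Diff rest)
  finally have sum_rest: "(\<Sum>i\<in>W - cnbrs E W r. expect N (stab N E W i) ?\<rho>) = \<dots>" .
  show ?thesis
    unfolding expect_Iop stab[OF r] sum_nbrs sum_rest by simp
qed

end

end

theorem theorem1:
  fixes N :: nat and E :: "nat \<Rightarrow> nat \<Rightarrow> bool" and L :: "nat set" and r :: nat
  assumes sym: "\<And>i j. E i j \<longleftrightarrow> E j i"
    and irrefl: "\<And>i. \<not> E i i"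
    and L_sub: "L \<subseteq> {1..N}"
    and r_in: "r \<in> {1..N}"
    and r_root: "card (nbrs E {1..N} r) = nmax E {1..N}"
    and r_notin: "r \<notin> L"
  defines "V \<equiv> {1..N}"
    and "W \<equiv> nbrs E {1..N} r - (\<Union>l\<in>L. cnbrs E {1..N} l)"
    and "T \<equiv> {1..N} - ((\<Union>l\<in>L. cnbrs E {1..N} l) \<union> cnbrs E {1..N} r)"
  shows "expect N (Iop N E V r) (post_loss N E L) = expect N (Iop N E (V - L) r) (post_loss N E L)
    \<and> expect N (Iop N E V r) (post_loss N E L) =
        complex_of_real
          (if cnbrs E V r \<inter> L = {}
           then sqrt 2 * real (nmax E V) + sqrt 2 * real (card W) + real (card T)
           else sqrt 2 * real (card W) + real (card T))"
proof -
  let ?D = "\<Union>l\<in>L. cnbrs E {1..N} l"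
  have intact: "cnbrs E V r \<inter> L = {} \<longleftrightarrow> r \<notin> ?D"
    using notin_loss_nbhd_iff[where E = E, OF sym r_in L_sub] by (simp add: V_def)
  have full: "expect N (Iop N E V r) (post_loss N E L) = complex_of_real
      (sqrt 2 * real (nmax E V) * (if r \<in> ?D then 0 else 1)
       + sqrt 2 * real (card W) + real (card T))"
    unfolding V_def W_def T_def
    using expect_Iop_post_loss[where E = E, OF sym irrefl L_sub _ _ r_in] by simp
  have lost: "expect N (Iop N E (V - L) r) (post_loss N E L) = complex_of_real
      (sqrt 2 * real (nmax E (V - L)) * (if r \<in> ?D then 0 else 1)
       + sqrt 2 * real (card W) + real (card T))"
    unfolding V_def W_def T_def
    using expect_Iop_post_loss[where E = E, OF sym irrefl L_sub _ _] r_in r_notin by simp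
  have "nmax E (V - L) = nmax E V" if "r \<notin> ?D"
    using that r_in r_notin r_root intact
    by (intro nmax_eq_if_root_nbrs_subset) (auto simp: V_def cnbrs_def nbrs_def)
  then show ?thesis
    unfolding full lost intact by auto
qed

end
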